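(* Let $W$ be a finite set of possible worlds and let $G=(2^W,\gg)$ and $G'=(2^W,\gg')$ be complete belief algebras on $W$. Then: (1) $\operatorname{Gen}(\Omega)=G$, where $\Omega=\{(\{\omega\},\{\omega'\})\mid \omega,\omega'\in W,\ \{\omega\}\gg\{\omega'\}\}$; (2) if for all $\omega,\omega'\in W$ we have $(\{\omega\},\{\omega'\})\in G$ iff $(\{\omega\},\{\omega'\})\in G'$, then $G=G'$.
   Context: $R_W=\{(U,V)\mid U,V\subseteq W,\ U\cap V=\varnothing\}$. A belief algebra on $W$ is a pair $(2^W,\gg)$, $\gg$ a binary relation on $2^W$, such that for all $U,V,U_1,V_1,U_2,V_2\subseteq W$: (A0) $\gg\subseteq R_W$; (A1) $U\gg\varnothing$ iff $U\neq\varnothing$; (A2) if $U\gg V$ then not $V\gg U$; (A3) if $U_1\supseteq U$, $U\gg V$, $V\supseteq V_1$ and $U_1\cap V_1=\varnothing$, then $U_1\gg V_1$; (A4) if $U=U_1\cup V_1=U_2\cup V_2$, $U_1\gg V_1$ and $U_2\gg V_2$, then $U_1\cap U_2\gg V_1\cup V_2$. A belief algebra is identified with its relation as a set of pairs. A complete belief algebra (CBA) is a belief algebra of the form $U\gg V$ iff $U\cap V=\varnothing$ and there is $\omega_1\in U$ with $\omega_1\prec\omega_2$ for all $\omega_2\in V$, for some total preorder $\preceq$ on $W$ (where $\omega\prec\omega'$ iff $\omega\preceq\omega'$ and not $\omega'\preceq\omega$). For $\Omega\subseteq R_W$, $\operatorname{Gen}(\Omega)$ is the smallest subset of $R_W$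 that contains $\Omega$, contains $(U,\varnothing)$ for every nonempty $U\subseteq W$, and is closed under: if $(U,V)$ is in it, $U\subseteq U_1$, $V_1\subseteq V$ and $U_1\cap V_1=\varnothing$, then $(U_1,V_1)$ is in it; if $U_1\cup V_1=U_2\cup V_2$ and $(U_1,V_1),(U_2,V_2)$ are in it, then $(U_1\cap U_2,V_1\cup V_2)$ is in it. *)

theory Defs
  imports Main
begin

definition R_W :: "'a set \<Rightarrow> ('a set \<times> 'a set) set" where
  "R_W W = {(U, V). U \<subseteq> W \<and> V \<subseteq> W \<and> U \<inter> V = {}}"

definition belief_algebra :: "'a set \<Rightarrow> ('a set \<times> 'a set) set \<Rightarrow> bool" where
  "belief_algebra W G \<longleftrightarrow>
     G \<subseteq> R_W W \<and>
     (\<forall>U. U \<subseteq> W \<longrightarrow> ((U, {}) \<in> G \<longleftrightarrow> U \<noteq> {})) \<and>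
     (\<forall>U V. U \<subseteq> W \<longrightarrow> V \<subseteq> W \<longrightarrow> (U, V) \<in> G \<longrightarrow> (V, U) \<notin> G) \<and>
     (\<forall>U V U1 V1. U \<subseteq> W \<longrightarrow> V \<subseteq> W \<longrightarrow> U1 \<subseteq> W \<longrightarrow> V1 \<subseteq> W \<longrightarrow>
        U \<subseteq> U1 \<longrightarrow> (U, V) \<in> G \<longrightarrow> V1 \<subseteq> V \<longrightarrow> U1 \<inter> V1 = {} \<longrightarrow> (U1, V1) \<in> G) \<and>
     (\<forall>U U1 V1 U2 V2. U \<subseteq> W \<longrightarrow> U1 \<subseteq> W \<longrightarrow> V1 \<subseteq> W \<longrightarrow> U2 \<subseteq> W \<longrightarrow> V2 \<subseteq> W \<longrightarrow>
        U = U1 \<union> V1 \<longrightarrow> U = U2 \<union> V2 \<longrightarrow> (U1, V1) \<in> G \<longrightarrow> (U2, V2) \<in> G \<longrightarrow>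
        (U1 \<inter> U2, V1 \<union> V2) \<in> G)"

text \<open>A total preorder on W, given as a relation P \<subseteq> W \<times> W; (x, y) \<in> P means x \<preceq> y.\<close>
definition total_preorder_on :: "'a set \<Rightarrow> 'a rel \<Rightarrow> bool" where
  "total_preorder_on W P \<longleftrightarrow> P \<subseteq> W \<times> W \<and> refl_on W P \<and> trans P \<and> total_on W P"

definition strict_of :: "'a rel \<Rightarrow> 'a \<Rightarrow> 'a \<Rightarrow> bool" where
  "strict_of P x y \<longleftrightarrow> (x, y) \<in> P \<and> (y, x) \<notin> P"

definition induced_algebra :: "'a set \<Rightarrow> 'a rel \<Rightarrow> ('a set \<times> 'a set) set" where
  "induced_algebra W P = {(U, V). U \<subseteq> W \<and> V \<subseteq> W \<and> U \<inter> V = {} \<and>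
      (\<exists>w1\<in>U. \<forall>w2\<in>V. strict_of P w1 w2)}"

definition complete_belief_algebra :: "'a set \<Rightarrow> ('a set \<times> 'a set) set \<Rightarrow> bool" where
  "complete_belief_algebra W G \<longleftrightarrow> belief_algebra W G \<and>
     (\<exists>P. total_preorder_on W P \<and> G = induced_algebra W P)"

inductive_set Gen :: "'a set \<Rightarrow> ('a set \<times> 'a set) set \<Rightarrow> ('a set \<times> 'a set) set"
  for W :: "'a set" and \<Omega> :: "('a set \<times> 'a set) set" where
  base: "p \<in> \<Omega> \<Longrightarrow> p \<in> Gen W \<Omega>"
| triv: "U \<subseteq> W \<Longrightarrow> U \<noteq> {} \<Longrightarrow> (U, {}) \<in> Gen W \<Omega>"
| mono: "(U, V) \<in> Gen W \<Omega> \<Longrightarrow> U \<subseteq> U1 \<Longrightarrow> U1 \<subseteq> W \<Longrightarrow> V1 \<subseteq> V \<Longrightarrow> U1 \<inter> V1 = {}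
         \<Longrightarrow> (U1, V1) \<in> Gen W \<Omega>"
| meet: "(U1, V1) \<in> Gen W \<Omega> \<Longrightarrow> (U2, V2) \<in> Gen W \<Omega> \<Longrightarrow> U1 \<union> V1 = U2 \<union> V2
         \<Longrightarrow> (U1 \<inter> U2, V1 \<union> V2) \<in> Gen W \<Omega>"

end

theory Submission
  imports Defs
begin

text \<open>
  If \<open>G\<close> is induced by a total preorder and \<open>(U, V) \<in> G\<close>, some \<open>w \<in> U\<close> is strictly
  below every element of \<open>V\<close>, so every \<open>({w}, {x})\<close> with \<open>x \<in> V\<close> is a generator.
  Since \<open>V\<close> is finite, repeated use of the meet rule glues these into \<open>({w}, V)\<close>, and
  monotonicity enlarges it to \<open>(U, V)\<close>. Conversely the closure rules of \<open>Gen\<close> are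
  instances of axioms (A1), (A3), (A4), so \<open>Gen\<close> never leaves a belief algebra containing
  its generators.
\<close>

lemma belief_algebra_carrier:
  assumes "belief_algebra W G" "(U, V) \<in> G"
  shows "U \<subseteq> W" "V \<subseteq> W"
proof -
  have "G \<subseteq> R_W W"
    using assms(1) unfolding belief_algebra_def by (elim conjE)
  then show "U \<subseteq> W" "V \<subseteq> W"
    using assms(2) unfolding R_W_def by auto
qed

lemma belief_algebra_empty_right:
  assumes "belief_algebra W G" "U \<subseteq> W" "U \<noteq> {}"
  shows "(U, {}) \<in> G"
proof -
  have "\<forall>U. U \<subseteq> W \<longrightarrow> ((U, {}) \<in> G \<longleftrightarrow> U \<noteq> {})"
    using assms(1) unfolding belief_algebra_def by (elim conjE)
  then show ?thesis using assms(2,3) by blast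
qed

lemma belief_algebra_widen:
  assumes "belief_algebra W G" "(U, V) \<in> G" "U \<subseteq> U1" "U1 \<subseteq> W" "V1 \<subseteq> V" "U1 \<inter> V1 = {}"
  shows "(U1, V1) \<in> G"
proof -
  have "\<forall>U V U1 V1. U \<subseteq> W \<longrightarrow> V \<subseteq> W \<longrightarrow> U1 \<subseteq> W \<longrightarrow> V1 \<subseteq> W \<longrightarrow>
        U \<subseteq> U1 \<longrightarrow> (U, V) \<in> G \<longrightarrow> V1 \<subseteq> V \<longrightarrow> U1 \<inter> V1 = {} \<longrightarrow> (U1, V1) \<in> G"
    using assms(1) unfolding belief_algebra_def by (elim conjE)
  from this[rule_format, of U V U1 V1] show ?thesis
    using assms belief_algebra_carrier[OF assms(1,2)] by blast
qed

lemma belief_algebra_meet: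
  assumes "belief_algebra W G" "(U1, V1) \<in> G" "(U2, V2) \<in> G" "U1 \<union> V1 = U2 \<union> V2"
  shows "(U1 \<inter> U2, V1 \<union> V2) \<in> G"
proof -
  have "\<forall>U U1 V1 U2 V2. U \<subseteq> W \<longrightarrow> U1 \<subseteq> W \<longrightarrow> V1 \<subseteq> W \<longrightarrow> U2 \<subseteq> W \<longrightarrow> V2 \<subseteq> W \<longrightarrow>
        U = U1 \<union> V1 \<longrightarrow> U = U2 \<union> V2 \<longrightarrow> (U1, V1) \<in> G \<longrightarrow> (U2, V2) \<in> G \<longrightarrow>
        (U1 \<inter> U2, V1 \<union> V2) \<in> G"
    using assms(1) unfolding belief_algebra_def by (elim conjE)
  from this[rule_format, of "U1 \<union> V1" U1 V1 U2 V2] show ?thesis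
    using assms belief_algebra_carrier[OF assms(1,2)] belief_algebra_carrier[OF assms(1,3)]
    by blast
qed

lemma Gen_subset_belief_algebra:
  assumes "belief_algebra W G" and "\<Omega> \<subseteq> G"
  shows "Gen W \<Omega> \<subseteq> G"
proof
  fix p assume "p \<in> Gen W \<Omega>"
  then show "p \<in> G"
  proof (induction p rule: Gen.induct)
    case (base p)
    then show ?case using assms(2) by blast
  next
    case (triv U)
    then show ?case by (rule belief_algebra_empty_right[OF assms(1)])
  next
    case (mono U V U1 V1)
    then show ?case by (intro belief_algebra_widen[OF assms(1) mono.IH])
  next
    case (meet U1 V1 U2 V2)
    then show ?case by (intro belief_algebra_meet[OF assms(1) meet.IH])
  qed
qed

definition singleton_pairs :: "'a set \<Rightarrow> ('a set \<times> 'a set) set \<Rightarrow> ('a set \<times> 'a set) set" where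
  "singleton_pairs W G = {({w}, {w'}) | w w'. w \<in> W \<and> w' \<in> W \<and> ({w}, {w'}) \<in> G}"

lemma singleton_pairs_cong:
  assumes "\<forall>w\<in>W. \<forall>w'\<in>W. ({w}, {w'}) \<in> G \<longleftrightarrow> ({w}, {w'}) \<in> G'"
  shows "singleton_pairs W G = singleton_pairs W G'"
  unfolding singleton_pairs_def using assms by (intro Collect_cong ex_cong1 conj_cong refl) auto

lemma Gen_singleton_if_pointwise:
  assumes "finite V" "V \<subseteq> W" "w \<in> W" "w \<notin> V"
    and "\<forall>x\<in>V. ({w}, {x}) \<in> Gen W \<Omega>"
  shows "({w}, V) \<in> Gen W \<Omega>"
  using assms
proof (induction V rule: finite_induct)
  case empty
  then show ?case by (intro Gen.triv) auto
next
  case (insert x A)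
  \<comment> \<open>Both pairs below cover \<open>{w, x} \<union> A\<close>, and their meet is \<open>({w}, insert x A)\<close>.\<close>
  have "({w, x}, A) \<in> Gen W \<Omega>"
    by (rule Gen.mono[OF insert.IH]) (use insert.prems insert.hyps in auto)
  moreover have "({w} \<union> A, {x}) \<in> Gen W \<Omega>"
    by (rule Gen.mono[of "{w}" "{x}"]) (use insert.prems insert.hyps in auto)
  ultimately have "({w, x} \<inter> ({w} \<union> A), A \<union> {x}) \<in> Gen W \<Omega>"
    by (rule Gen.meet) auto
  moreover have "{w, x} \<inter> ({w} \<union> A) = {w}" "A \<union> {x} = insert x A"
    using insert.hyps(2) by auto
  ultimately show ?case by (simp only:)
qed

lemma strict_pair_in_induced_algebra:
  assumes "w \<in> W" "x \<in> W" "strict_of P w x"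
  shows "({w}, {x}) \<in> induced_algebra W P"
proof -
  have "w \<noteq> x" using assms(3) unfolding strict_of_def by blast
  then show ?thesis using assms unfolding induced_algebra_def by blast
qed

lemma induced_algebra_subset_Gen:
  assumes "finite W"
  shows "induced_algebra W P \<subseteq> Gen W (singleton_pairs W (induced_algebra W P))"
    (is "_ \<subseteq> Gen W ?\<Omega>")
proof (rule subsetI, clarify)
  fix U V assume "(U, V) \<in> induced_algebra W P"
  then obtain w where UV: "U \<subseteq> W" "V \<subseteq> W" "U \<inter> V = {}"
    and w: "w \<in> U" "\<forall>x\<in>V. strict_of P w x"
    unfolding induced_algebra_def by blast
  have "({w}, {x}) \<in> Gen W ?\<Omega>" if "x \<in> V" for x
  proof (rule Gen.base)
    have "w \<in> W" "x \<in> W" using that UV w by auto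
    then show "({w}, {x}) \<in> ?\<Omega>"
      using strict_pair_in_induced_algebra[of w W x P] w(2) that
      unfolding singleton_pairs_def by blast
  qed
  moreover have "w \<in> W" "w \<notin> V" using UV w by auto
  ultimately have "({w}, V) \<in> Gen W ?\<Omega>"
    using Gen_singleton_if_pointwise[OF finite_subset[OF UV(2) assms] UV(2)] by blast
  then show "(U, V) \<in> Gen W ?\<Omega>"
    by (rule Gen.mono[OF _ _ UV(1) subset_refl UV(3)]) (use w in blast)
qed

lemma Gen_singleton_pairs_eq:
  assumes "finite W" and "complete_belief_algebra W G"
  shows "Gen W (singleton_pairs W G) = G"
proof
  obtain P where "belief_algebra W G" and G: "G = induced_algebra W P"
    using assms(2) unfolding complete_belief_algebra_def by blast
  then show "Gen W (singleton_pairs W G) \<subseteq> G"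
    by (intro Gen_subset_belief_algebra) (auto simp: singleton_pairs_def)
  show "G \<subseteq> Gen W (singleton_pairs W G)"
    unfolding G by (rule induced_algebra_subset_Gen[OF assms(1)])
qed

theorem corollary1:
  fixes W :: "'a set" and G G' :: "('a set \<times> 'a set) set"
  assumes "finite W"
    and "complete_belief_algebra W G"
    and "complete_belief_algebra W G'"
  shows "Gen W {({w}, {w'}) | w w'. w \<in> W \<and> w' \<in> W \<and> ({w}, {w'}) \<in> G} = G \<and>
     ((\<forall>w\<in>W. \<forall>w'\<in>W. ({w}, {w'}) \<in> G \<longleftrightarrow> ({w}, {w'}) \<in> G') \<longrightarrow> G = G')"
proof (intro conjI impI)
  show "Gen W {({w}, {w'}) | w w'. w \<in> W \<and> w' \<in> W \<and> ({w}, {w'}) \<in> G} = G"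
    using Gen_singleton_pairs_eq[OF assms(1,2)] unfolding singleton_pairs_def .
  assume "\<forall>w\<in>W. \<forall>w'\<in>W. ({w}, {w'}) \<in> G \<longleftrightarrow> ({w}, {w'}) \<in> G'"
  then have "singleton_pairs W G = singleton_pairs W G'"
    by (rule singleton_pairs_cong)
  then show "G = G'"
    using Gen_singleton_pairs_eq[OF assms(1,2)] Gen_singleton_pairs_eq[OF assms(1,3)] by metis
qed

end
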